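(* Let $\mathfrak{R}_1=(G,G'_1,S,\phi,\rho_1,\delta_1)$ and $\mathfrak{R}_2=(G,G'_2,S,\phi,\rho_2,\delta_2)$ be reconciliations (of the same $G$, $S$, $\phi$) and $x\in V(G)$. Then $\rho_1(x)$ and $\rho_2(x)$ are comparable in $S$ (one is an ancestor of the other).
   Context: All trees are rooted binary trees whose root node has degree 1; every other non-leaf node $x$ has exactly two children $x_l,x_r$. For nodes of a rooted tree, $y\le x$ means $x$ lies on the path from $y$ to the root; two nodes are comparable if one is $\le$ the other. $G$ is a gene tree, $S$ a species tree, $\phi:L(G)\to L(S)$. A tree $G'$ is an extension of $G$ if $G$ is obtained from $G'$ by pruning some subtrees and suppressing degree-2 nodes; $V(G)\subseteq V(G')$. A map $\rho:V(G')\to V(S)$ is consistent with $S$ if $\rho(root(G'))=root(S)$ and every node $x$ of $G'$ with two children satisfies (D) $\rho(x)=\rho(x_l)=\rho(x_r)$ or (S) $\rho(x)_l=\rho(x_l)$ and $\rho(x)_r=\rho(x_r)$. A reconciliation $(G,G',S,\phi,\rho,\delta)$ consists of an extension $G'$ of $G$, a consistent $\rho$ with $\rho|_{L(G)}=\phi$, and an injective partial function $\delta$ from duplications (nodes satisfying (D)) to losses ($L(G')\setminus L(G)$) with $\rho(x)=\rho(\delta(x))$. *)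

theory Defs
  imports Main
begin

text \<open>A rooted tree with node identities: a node set, a root, and an ordered
  list of children for every node (first = left child, second = right child).\<close>

record 'a rtree =
  nodes :: "'a set"
  root :: 'a
  children :: "'a \<Rightarrow> 'a list"

definition edges :: "'a rtree \<Rightarrow> ('a \<times> 'a) set" where
  "edges T = {(c, p). p \<in> nodes T \<and> c \<in> set (children T p)}"

definition tle :: "'a rtree \<Rightarrow> 'a \<Rightarrow> 'a \<Rightarrow> bool" where
  "tle T y x \<longleftrightarrow> y \<in> nodes T \<and> x \<in> nodes T \<and> (y, x) \<in> (edges T)\<^sup>*"

definition comparable :: "'a rtree \<Rightarrow> 'a \<Rightarrow> 'a \<Rightarrow> bool" where
  "comparable T a b \<longleftrightarrow> tle T a b \<or> tle T b a"

definition leaves :: "'a rtree \<Rightarrow> 'a set" where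
  "leaves T = {x \<in> nodes T. children T x = []}"

definition lc :: "'a rtree \<Rightarrow> 'a \<Rightarrow> 'a" where
  "lc T x = children T x ! 0"

definition rc :: "'a rtree \<Rightarrow> 'a \<Rightarrow> 'a" where
  "rc T x = children T x ! 1"

definition rooted_binary_tree :: "'a rtree \<Rightarrow> bool" where
  "rooted_binary_tree T \<longleftrightarrow>
     finite (nodes T) \<and> root T \<in> nodes T \<and>
     (\<forall>x\<in>nodes T. set (children T x) \<subseteq> nodes T) \<and>
     length (children T (root T)) = 1 \<and>
     (\<forall>x\<in>nodes T - {root T}. length (children T x) \<in> {0, 2}) \<and>
     (\<forall>x\<in>nodes T. distinct (children T x)) \<and>
     (\<forall>p\<in>nodes T. root T \<notin> set (children T p)) \<and>
     (\<forall>c p q. (c, p) \<in> edges T \<and> (c, q) \<in> edges T \<longrightarrow> p = q) \<and>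
     (\<forall>x\<in>nodes T. (x, root T) \<in> (edges T)\<^sup>*)"

text \<open>G' is an extension of G: G arises from G' by pruning the subtrees rooted at
  the nodes of some set P, and then suppressing all degree-2 nodes (non-root nodes
  with exactly one remaining child); the nodes keep their identities.\<close>
definition extension :: "'a rtree \<Rightarrow> 'a rtree \<Rightarrow> bool" where
  "extension G' G \<longleftrightarrow>
    (\<exists>P \<subseteq> nodes G'.
       let K = nodes G' - {v. \<exists>p\<in>P. tle G' v p};
           chK = (\<lambda>v. filter (\<lambda>c. c \<in> K) (children G' v))
       in root G' \<in> K \<and>
          nodes G = {v \<in> K. v = root G' \<or> length (chK v) \<noteq> 1} \<and>
          root G = root G' \<and>
          (\<forall>x \<in> nodes G. distinct (children G x) \<and>
             set (children G x) =
               {c \<in> nodes G. c \<noteq> x \<and> tle G' c x \<and>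
                  (\<forall>w\<in>nodes G. tle G' c w \<and> tle G' w x \<longrightarrow> w = c \<or> w = x)}))"

definition is_dup :: "'a rtree \<Rightarrow> 'b rtree \<Rightarrow> ('a \<Rightarrow> 'b) \<Rightarrow> 'a \<Rightarrow> bool" where
  "is_dup G' S \<rho> x \<longleftrightarrow> x \<in> nodes G' \<and> length (children G' x) = 2 \<and>
     \<rho> x = \<rho> (lc G' x) \<and> \<rho> x = \<rho> (rc G' x)"

definition is_spec :: "'a rtree \<Rightarrow> 'b rtree \<Rightarrow> ('a \<Rightarrow> 'b) \<Rightarrow> 'a \<Rightarrow> bool" where
  "is_spec G' S \<rho> x \<longleftrightarrow> x \<in> nodes G' \<and> length (children G' x) = 2 \<and>
     length (children S (\<rho> x)) = 2 \<and>
     lc S (\<rho> x) = \<rho> (lc G' x) \<and> rc S (\<rho> x) = \<rho> (rc G' x)"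

definition consistent :: "'a rtree \<Rightarrow> 'b rtree \<Rightarrow> ('a \<Rightarrow> 'b) \<Rightarrow> bool" where
  "consistent G' S \<rho> \<longleftrightarrow>
     (\<forall>x\<in>nodes G'. \<rho> x \<in> nodes S) \<and>
     \<rho> (root G') = root S \<and>
     (\<forall>x\<in>nodes G'. length (children G' x) = 2 \<longrightarrow> is_dup G' S \<rho> x \<or> is_spec G' S \<rho> x)"

text \<open>Reconciliation (G, G', S, phi, rho, delta); delta is an injective partial
  function from duplications to losses.\<close>
definition reconciliation ::
  "'a rtree \<Rightarrow> 'a rtree \<Rightarrow> 'b rtree \<Rightarrow> ('a \<Rightarrow> 'b) \<Rightarrow> ('a \<Rightarrow> 'b) \<Rightarrow> ('a \<Rightarrow> 'a option) \<Rightarrow> bool" where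
  "reconciliation G G' S \<phi> \<rho> \<delta> \<longleftrightarrow>
     rooted_binary_tree G' \<and> extension G' G \<and> consistent G' S \<rho> \<and>
     (\<forall>l\<in>leaves G. \<rho> l = \<phi> l) \<and>
     dom \<delta> \<subseteq> {x. is_dup G' S \<rho> x} \<and>
     ran \<delta> \<subseteq> leaves G' - leaves G \<and>
     inj_on \<delta> (dom \<delta>) \<and>
     (\<forall>x\<in>dom \<delta>. \<rho> x = \<rho> (the (\<delta> x)))"

end

theory Submission
  imports Defs
begin

text \<open>Every node x of G lies above some leaf l of G. Being an ancestor in G is inherited by
  every extension G', and a map consistent with S sends child-parent edges of G' to
  descendant-ancestor pairs of S. Hence \<rho>1 x and \<rho>2 x are both ancestors of
  \<rho>1 l = \<phi> l = \<rho>2 l in S, and the ancestors of a node form a chain because every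
  node has at most one parent.\<close>

lemma rtrancl_map_rtrancl:
  assumes "\<And>c p. (c, p) \<in> E \<Longrightarrow> (f c, f p) \<in> F\<^sup>*" and "(c, p) \<in> E\<^sup>*"
  shows "(f c, f p) \<in> F\<^sup>*"
  using assms(2)
proof (induction rule: rtrancl_induct)
  case (step y z)
  then show ?case using assms(1) by (meson rtrancl_trans)
qed simp

lemma single_valued_cycle_returns:
  assumes sv: "single_valued E" and cycle: "(y, y) \<in> E\<^sup>+" and "(y, z) \<in> E\<^sup>*"
  shows "(z, y) \<in> E\<^sup>+"
  using assms(3)
proof (induction rule: rtrancl_induct)
  case base
  then show ?case using cycle by simp
next
  case (step z w)
  from step.IH obtain z' where "(z, z') \<in> E" and "(z', y) \<in> E\<^sup>*" by (meson tranclD)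
  with step.hyps(2) sv have "w = z'" by (simp add: single_valuedD)
  with \<open>(z', y) \<in> E\<^sup>*\<close> cycle show ?case by (simp add: rtrancl_trancl_trancl)
qed

lemma rooted_binary_tree_single_valued_edges:
  assumes "rooted_binary_tree T"
  shows "single_valued (edges T)"
  using assms unfolding rooted_binary_tree_def by (auto intro: single_valuedI)

lemma rooted_binary_tree_edges_subset:
  assumes "rooted_binary_tree T"
  shows "edges T \<subseteq> nodes T \<times> nodes T"
  using assms unfolding rooted_binary_tree_def edges_def by auto

lemma rooted_binary_tree_acyclic_edges:
  assumes T: "rooted_binary_tree T"
  shows "acyclic (edges T)"
proof (rule acyclicI, intro allI notI)
  fix y
  assume cycle: "(y, y) \<in> (edges T)\<^sup>+"
  then have "y \<in> nodes T"
    using rooted_binary_tree_edges_subset[OF T] by (auto dest: tranclD)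
  with T have "(y, root T) \<in> (edges T)\<^sup>*"
    unfolding rooted_binary_tree_def by blast
  with single_valued_cycle_returns[OF rooted_binary_tree_single_valued_edges[OF T] cycle]
  have "(root T, y) \<in> (edges T)\<^sup>+" by blast
  then obtain w where "(root T, w) \<in> edges T" by (meson tranclD)
  with T show False unfolding rooted_binary_tree_def edges_def by auto
qed

lemma rooted_binary_tree_wf_edges:
  assumes T: "rooted_binary_tree T"
  shows "wf (edges T)"
proof (rule finite_acyclic_wf)
  show "finite (edges T)"
    using rooted_binary_tree_edges_subset[OF T] T unfolding rooted_binary_tree_def
    by (meson finite_SigmaI finite_subset)
  show "acyclic (edges T)" using rooted_binary_tree_acyclic_edges[OF T] .
qed

lemma rooted_binary_tree_leaf_below:
  assumes T: "rooted_binary_tree T" and x: "x \<in> nodes T"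
  obtains l where "l \<in> leaves T" and "(l, x) \<in> (edges T)\<^sup>*"
proof -
  let ?below_x = "{y. (y, x) \<in> (edges T)\<^sup>*}"
  have "x \<in> ?below_x" by simp
  then obtain y where yx: "y \<in> ?below_x" and minimal: "\<And>c. (c, y) \<in> edges T \<Longrightarrow> c \<notin> ?below_x"
    using wfE_min[OF rooted_binary_tree_wf_edges[OF T]] by metis
  have y: "y \<in> nodes T"
    using yx x rooted_binary_tree_edges_subset[OF T]
    by (auto elim: converse_rtranclE)
  have "children T y = []"
  proof (rule ccontr)
    assume "children T y \<noteq> []"
    then obtain c where "c \<in> set (children T y)" by (cases "children T y") auto
    with y have "(c, y) \<in> edges T" by (simp add: edges_def)
    with minimal yx show False by (meson converse_rtrancl_into_rtrancl mem_Collect_eq)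
  qed
  with y yx show thesis using that by (auto simp: leaves_def)
qed

lemma extension_nodes_subset:
  assumes "extension G' G"
  shows "nodes G \<subseteq> nodes G'"
  using assms unfolding extension_def Let_def by auto

lemma extension_ancestor:
  assumes "extension G' G" and "(c, p) \<in> (edges G)\<^sup>*"
  shows "(c, p) \<in> (edges G')\<^sup>*"
proof -
  have "edges G \<subseteq> (edges G')\<^sup>*"
    using assms(1) unfolding extension_def Let_def edges_def tle_def by auto
  then show ?thesis using assms(2) rtrancl_subset_rtrancl by blast
qed

lemma consistent_edge_ancestor:
  assumes T: "rooted_binary_tree G'" and S: "rooted_binary_tree S"
    and cons: "consistent G' S \<rho>" and edge: "(c, p) \<in> edges G'"
  shows "(\<rho> c, \<rho> p) \<in> (edges S)\<^sup>*"
proof (cases "p = root G'")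
  case True
  have "c \<in> nodes G'" using edge rooted_binary_tree_edges_subset[OF T] by auto
  then have "\<rho> c \<in> nodes S" using cons unfolding consistent_def by auto
  moreover have "\<rho> p = root S" using True cons unfolding consistent_def by auto
  ultimately show ?thesis using S unfolding rooted_binary_tree_def by auto
next
  case False
  have p: "p \<in> nodes G'" and c: "c \<in> set (children G' p)" using edge by (auto simp: edges_def)
  have "length (children G' p) \<in> {0, 2}"
    using T p False unfolding rooted_binary_tree_def by blast
  with c have "length (children G' p) = 2" by auto
  then obtain a b where ab: "children G' p = [a, b]"
    by (auto simp: numeral_2_eq_2 length_Suc_conv)
  have c_lc_rc: "c = lc G' p \<or> c = rc G' p" using ab c by (auto simp: lc_def rc_def)
  have "is_dup G' S \<rho> p \<or> is_spec G' S \<rho> p"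
    using cons p ab unfolding consistent_def by auto
  then show ?thesis
  proof
    assume "is_dup G' S \<rho> p"
    then show ?thesis using c_lc_rc unfolding is_dup_def by auto
  next
    assume spec: "is_spec G' S \<rho> p"
    then have "length (children S (\<rho> p)) = 2" unfolding is_spec_def by auto
    then have "lc S (\<rho> p) \<in> set (children S (\<rho> p))" "rc S (\<rho> p) \<in> set (children S (\<rho> p))"
      unfolding lc_def rc_def by auto
    moreover have "\<rho> p \<in> nodes S" using cons p unfolding consistent_def by auto
    ultimately have "(lc S (\<rho> p), \<rho> p) \<in> edges S" "(rc S (\<rho> p), \<rho> p) \<in> edges S"
      by (auto simp: edges_def)
    with spec c_lc_rc show ?thesis unfolding is_spec_def by auto
  qed
qed

lemma reconciliation_leaf_ancestor:
  assumes S: "rooted_binary_tree S" and R: "reconciliation G G' S \<phi> \<rho> \<delta>"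
    and l: "l \<in> leaves G" and lx: "(l, x) \<in> (edges G)\<^sup>*"
  shows "(\<phi> l, \<rho> x) \<in> (edges S)\<^sup>*"
proof -
  have T: "rooted_binary_tree G'" and ext: "extension G' G" and cons: "consistent G' S \<rho>"
    and "\<rho> l = \<phi> l"
    using R l unfolding reconciliation_def by auto
  have "(\<rho> l, \<rho> x) \<in> (edges S)\<^sup>*"
    by (rule rtrancl_map_rtrancl[OF consistent_edge_ancestor[OF T S cons] extension_ancestor[OF ext lx]])
  with \<open>\<rho> l = \<phi> l\<close> show ?thesis by simp
qed

lemma reconciliation_node_image:
  assumes "reconciliation G G' S \<phi> \<rho> \<delta>" and "x \<in> nodes G"
  shows "\<rho> x \<in> nodes S"
  using assms extension_nodes_subset unfolding reconciliation_def consistent_def by blast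

theorem lemma5:
  assumes "rooted_binary_tree G" and "rooted_binary_tree S"
    and "\<forall>l\<in>leaves G. \<phi> l \<in> leaves S"
    and "reconciliation G G1' S \<phi> \<rho>1 \<delta>1"
    and "reconciliation G G2' S \<phi> \<rho>2 \<delta>2"
    and "x \<in> nodes G"
  shows "comparable S (\<rho>1 x) (\<rho>2 x)"
proof -
  obtain l where l: "l \<in> leaves G" and lx: "(l, x) \<in> (edges G)\<^sup>*"
    using rooted_binary_tree_leaf_below[OF assms(1,6)] .
  have "(\<phi> l, \<rho>1 x) \<in> (edges S)\<^sup>*" and "(\<phi> l, \<rho>2 x) \<in> (edges S)\<^sup>*"
    using reconciliation_leaf_ancestor[OF assms(2) _ l lx] assms(4,5) by blast+
  then have "(\<rho>1 x, \<rho>2 x) \<in> (edges S)\<^sup>* \<or> (\<rho>2 x, \<rho>1 x) \<in> (edges S)\<^sup>*"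
    using single_valued_confluent[OF rooted_binary_tree_single_valued_edges[OF assms(2)]]
    by blast
  moreover have "\<rho>1 x \<in> nodes S" and "\<rho>2 x \<in> nodes S"
    using reconciliation_node_image[OF assms(4,6)] reconciliation_node_image[OF assms(5,6)] .
  ultimately show ?thesis unfolding comparable_def tle_def by blast
qed

end
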